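(* Let $f:\subseteq X\rightrightarrows Y$ be a diverse problem, i.e. for every $x\in\mathrm{dom}(f)$ there is $y\in\mathrm{dom}(f)$ with $f(x)\cap f(y)=\emptyset$. Then $f$ is strongly co-complete: for every problem $g$, $f\le_{sW}\overline g\iff f\le_{sW}g$. If moreover the representation $\delta_Y$ is total, then $f$ is strongly co-total: for every problem $g$, $f\le_{sW}\mathsf{T}g\iff f\le_{sW}g$.
   Context: Represented space $(X,\delta_X)$: set with surjective partial $\delta_X:\subseteq\mathbb{N}^\mathbb{N}\to X$. A problem $f:\subseteq X\rightrightarrows Y$ is a partial multi-valued map with nonempty values on its domain; $F\vdash f$ means $\delta_YF(p)\in f(\delta_X(p))$ whenever $\delta_X(p)\in\mathrm{dom}(f)$. $f\le_{sW}g$ iff there are computable partial $H,K:\subseteq\mathbb{N}^\mathbb{N}\to\mathbb{N}^\mathbb{N}$ with $HGK\vdash f$ for all $G\vdash g$. For $p\in\mathbb{N}^\mathbb{N}$, $p-1$ is the concatenation of $p(0)-1,p(1)-1,\dots$ with $0-1$ the empty word. The completion of $(X,\delta_X)$ is $\overline X=X\cup\{\bot\}$ with $\delta_{\overline X}(p)=\delta_X(p-1)$ if $p-1$ is an infinite sequence in $\mathrm{dom}(\delta_X)$, $\delta_{\overline X}(p)=\bot$ otherwise. For $g:\subseteq U\rightrightarrows V$, the completion $\overline g:\overline U\rightrightarrows\overline V$ is $\overline g(u)=g(u)$ for $u\in\mathrm{dom}(g)$ and $\overline V$ otherwise; the totalization $\mathsf{T}g:U\rightrightarrows V$ is $\mathsf{T}g(u)=g(u)$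 for $u\in\mathrm{dom}(g)$ and $V$ otherwise. *)

theory Defs
  imports Main "HOL-Library.Nat_Bijection" "HOL-Library.Sublist" "HOL-Library.Infinite_Set"
begin

datatype recf = Zero | Succ | Proj nat | Comp recf "recf list" | Prim recf recf | Mn recf

lemma list_all2_mono_ind [mono]:
  "(\<And>x y. P x y \<longrightarrow> Q x y) \<Longrightarrow> list_all2 P xs ys \<longrightarrow> list_all2 Q xs ys"
  by (auto elim: list_all2_mono)

inductive rec_eval :: "recf \<Rightarrow> nat list \<Rightarrow> nat \<Rightarrow> bool" where
  "rec_eval Zero xs 0"
| "rec_eval Succ (x # xs) (Suc x)"
| "i < length xs \<Longrightarrow> rec_eval (Proj i) xs (xs ! i)"
| "list_all2 (\<lambda>g y. rec_eval g xs y) gs ys \<Longrightarrow> rec_eval f ys z \<Longrightarrow> rec_eval (Comp f gs) xs z"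
| "rec_eval f xs y \<Longrightarrow> rec_eval (Prim f g) (0 # xs) y"
| "rec_eval (Prim f g) (n # xs) y \<Longrightarrow> rec_eval g (y # n # xs) z
     \<Longrightarrow> rec_eval (Prim f g) (Suc n # xs) z"
| "rec_eval f (n # xs) 0 \<Longrightarrow> (\<forall>m<n. \<exists>y. 0 < y \<and> rec_eval f (m # xs) y)
     \<Longrightarrow> rec_eval (Mn f) xs n"

definition total_recursive :: "(nat \<Rightarrow> nat) \<Rightarrow> bool" where
  "total_recursive h \<longleftrightarrow> (\<exists>c. \<forall>n. rec_eval c [n] (h n))"

type_synonym baire = "nat \<Rightarrow> nat"

definition pref :: "baire \<Rightarrow> nat \<Rightarrow> nat list" where
  "pref p m = map p [0..<m]"

text \<open>A partial F on Baire space is computable iff it is computed (on its domain) by a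
  Type-2 machine, i.e. by a computable prefix-monotone word function h whose outputs on
  the prefixes of p converge to F(p).\<close>
definition computable :: "(baire \<Rightarrow> baire option) \<Rightarrow> bool" where
  "computable F \<longleftrightarrow> (\<exists>h :: nat list \<Rightarrow> nat list.
     total_recursive (\<lambda>n. list_encode (h (list_decode n))) \<and>
     (\<forall>v w. prefix v w \<longrightarrow> prefix (h v) (h w)) \<and>
     (\<forall>p q. F p = Some q \<longrightarrow>
        (\<forall>n. \<exists>m. n < length (h (pref p m))) \<and>
        (\<forall>m i. i < length (h (pref p m)) \<longrightarrow> h (pref p m) ! i = q i)))"

text \<open>A problem f :\<subseteq> X \<rightrightarrows> Y is modelled as 'x \<Rightarrow> 'y set, with dom(f) = {x. f x \<noteq> {}}.\<close>

definition represented :: "(baire \<Rightarrow> 'x option) \<Rightarrow> bool" where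
  "represented \<delta> \<longleftrightarrow> (\<forall>x. \<exists>p. \<delta> p = Some x)"

definition pdom :: "('x \<Rightarrow> 'y set) \<Rightarrow> 'x set" where
  "pdom f = {x. f x \<noteq> {}}"

definition realizes :: "(baire \<Rightarrow> 'x option) \<Rightarrow> (baire \<Rightarrow> 'y option) \<Rightarrow>
    (baire \<Rightarrow> baire option) \<Rightarrow> ('x \<Rightarrow> 'y set) \<Rightarrow> bool" where
  "realizes \<delta>X \<delta>Y F f \<longleftrightarrow> (\<forall>p x. \<delta>X p = Some x \<and> x \<in> pdom f \<longrightarrow>
      (\<exists>q y. F p = Some q \<and> \<delta>Y q = Some y \<and> y \<in> f x))"

definition sW_le :: "(baire \<Rightarrow> 'x option) \<Rightarrow> (baire \<Rightarrow> 'y option) \<Rightarrow> ('x \<Rightarrow> 'y set) \<Rightarrow>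
    (baire \<Rightarrow> 'u option) \<Rightarrow> (baire \<Rightarrow> 'v option) \<Rightarrow> ('u \<Rightarrow> 'v set) \<Rightarrow> bool" where
  "sW_le \<delta>X \<delta>Y f \<delta>U \<delta>V g \<longleftrightarrow> (\<exists>H K. computable H \<and> computable K \<and>
     (\<forall>G. realizes \<delta>U \<delta>V G g \<longrightarrow>
        realizes \<delta>X \<delta>Y (\<lambda>p. Option.bind (K p) (\<lambda>r. Option.bind (G r) H)) f))"

text \<open>p - 1: delete the zeros of p and subtract 1 from the other entries; it is an
  infinite sequence iff p has infinitely many nonzero entries.\<close>
definition minus1 :: "baire \<Rightarrow> baire" where
  "minus1 p = (\<lambda>k. p (enumerate {n. p n \<noteq> 0} k) - 1)"

text \<open>Completed space: 'x option, None playing the role of \<bottom>.\<close>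
definition compl_rep :: "(baire \<Rightarrow> 'x option) \<Rightarrow> baire \<Rightarrow> 'x option option" where
  "compl_rep \<delta> p = (if infinite {n. p n \<noteq> 0} \<and> \<delta> (minus1 p) \<noteq> None
                      then Some (\<delta> (minus1 p)) else Some None)"

definition compl_prob :: "('u \<Rightarrow> 'v set) \<Rightarrow> 'u option \<Rightarrow> 'v option set" where
  "compl_prob g u = (case u of Some u' \<Rightarrow> (if g u' \<noteq> {} then Some ` g u' else UNIV)
                              | None \<Rightarrow> UNIV)"

definition totalization :: "('u \<Rightarrow> 'v set) \<Rightarrow> 'u \<Rightarrow> 'v set" where
  "totalization g u = (if g u \<noteq> {} then g u else UNIV)"

definition diverse :: "('x \<Rightarrow> 'y set) \<Rightarrow> bool" where
  "diverse f \<longleftrightarrow> (\<forall>x\<in>pdom f. \<exists>y\<in>pdom f. f x \<inter> f y = {})"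

end

theory Submission
  imports Defs
begin

(* A reduction of a diverse problem f to a problem g' only queries instances on which g' is
  nontrivial: if the query made for an instance x of f could be answered by anything, a realizer
  of g' could answer it exactly as it answers the query made for an instance y with f x and f y
  disjoint, and the reduction would return one output that is a solution for both x and y.
  For the completion and the totalization of g the nontrivial instances are names of points of
  dom g, where both problems coincide with g. What remains is that the translations p + 1 and
  p - 1 between names of U and names of its completion are computable. *)

section \<open>Primitive recursive functions\<close>

lemma rec_eval_Zero: "rec_eval Zero xs 0"
  by (rule rec_eval.intros)

lemma rec_eval_Succ: "z = Suc x \<Longrightarrow> rec_eval Succ (x # xs) z"
  by (simp add: rec_eval.intros(2))

lemma rec_eval_Proj: "i < length xs \<Longrightarrow> z = xs ! i \<Longrightarrow> rec_eval (Proj i) xs z"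
  by (simp add: rec_eval.intros(3))

lemma rec_eval_Comp1:
  "rec_eval g xs a \<Longrightarrow> rec_eval f [a] z \<Longrightarrow> rec_eval (Comp f [g]) xs z"
  by (rule rec_eval.intros(4)[where ys = "[a]"]) auto

lemma rec_eval_Comp2:
  "rec_eval g1 xs a \<Longrightarrow> rec_eval g2 xs b \<Longrightarrow> rec_eval f [a, b] z
    \<Longrightarrow> rec_eval (Comp f [g1, g2]) xs z"
  by (rule rec_eval.intros(4)[where ys = "[a, b]"]) auto

lemma rec_eval_Comp3:
  "rec_eval g1 xs a \<Longrightarrow> rec_eval g2 xs b \<Longrightarrow> rec_eval g3 xs c \<Longrightarrow> rec_eval f [a, b, c] z
    \<Longrightarrow> rec_eval (Comp f [g1, g2, g3]) xs z"
  by (rule rec_eval.intros(4)[where ys = "[a, b, c]"]) auto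

lemma rec_eval_Prim:
  assumes "rec_eval f xs a" and "\<And>y n. rec_eval g (y # n # xs) (s n y)"
  shows "rec_eval (Prim f g) (n # xs) (rec_nat a s n)"
proof (induction n)
  case 0
  then show ?case using assms(1) by (simp add: rec_eval.intros(5))
next
  case (Suc n)
  then show ?case using assms(2) by (simp add: rec_eval.intros(6))
qed

lemmas rec_eval_basic = rec_eval_Zero rec_eval_Succ rec_eval_Proj
  rec_eval_Comp1 rec_eval_Comp2 rec_eval_Comp3

lemma total_recursive_comp:
  "total_recursive a \<Longrightarrow> total_recursive b \<Longrightarrow> total_recursive (\<lambda>n. a (b n))"
  unfolding total_recursive_def by (metis rec_eval_Comp1)

definition rf_pred :: recf where
  "rf_pred = Prim Zero (Proj 1)"

lemma rec_eval_pred: "z = n - 1 \<Longrightarrow> rec_eval rf_pred [n] z"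
proof -
  assume "z = n - 1"
  moreover have "rec_eval rf_pred [n] (rec_nat 0 (\<lambda>n y. n) n)"
    unfolding rf_pred_def by (rule rec_eval_Prim; intro rec_eval_basic) simp_all
  moreover have "rec_nat 0 (\<lambda>n y. n) n = n - 1"
    by (cases n) auto
  ultimately show ?thesis by simp
qed

definition rf_sub :: recf where
  "rf_sub = Comp (Prim (Proj 0) (Comp rf_pred [Proj 0])) [Proj 1, Proj 0]"

lemma rec_eval_sub: "z = a - b \<Longrightarrow> rec_eval rf_sub [a, b] z"
proof -
  assume "z = a - b"
  moreover have "rec_eval (Prim (Proj 0) (Comp rf_pred [Proj 0])) [b, a]
      (rec_nat a (\<lambda>n y. y - 1) b)"
    by (rule rec_eval_Prim; intro rec_eval_basic rec_eval_pred) simp_all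
  moreover have "rec_nat a (\<lambda>n y. y - 1) b = a - b"
    by (induction b) auto
  ultimately show ?thesis
    unfolding rf_sub_def by (intro rec_eval_basic) simp_all
qed

definition rf_add :: recf where
  "rf_add = Prim (Proj 0) (Comp Succ [Proj 0])"

lemma rec_eval_add: "z = a + b \<Longrightarrow> rec_eval rf_add [a, b] z"
proof -
  assume "z = a + b"
  moreover have "rec_eval rf_add [a, b] (rec_nat b (\<lambda>n y. Suc y) a)"
    unfolding rf_add_def by (rule rec_eval_Prim; intro rec_eval_basic) simp_all
  moreover have "rec_nat b (\<lambda>n y. Suc y) a = a + b"
    by (induction a) auto
  ultimately show ?thesis by simp
qed

definition rf_triangle :: recf where
  "rf_triangle = Prim Zero (Comp Succ [Comp rf_add [Proj 0, Proj 1]])"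

lemma rec_eval_triangle: "z = triangle n \<Longrightarrow> rec_eval rf_triangle [n] z"
proof -
  assume "z = triangle n"
  moreover have "rec_eval rf_triangle [n] (rec_nat 0 (\<lambda>n y. Suc (y + n)) n)"
    unfolding rf_triangle_def by (rule rec_eval_Prim; intro rec_eval_basic rec_eval_add) simp_all
  moreover have "rec_nat 0 (\<lambda>n y. Suc (y + n)) n = triangle n"
    by (induction n) auto
  ultimately show ?thesis by simp
qed

definition rf_prod_encode :: recf where
  "rf_prod_encode = Comp rf_add [Comp rf_triangle [Comp rf_add [Proj 0, Proj 1]], Proj 0]"

lemma rec_eval_prod_encode: "z = prod_encode (a, b) \<Longrightarrow> rec_eval rf_prod_encode [a, b] z"
  unfolding rf_prod_encode_def prod_encode_def
  by (intro rec_eval_basic rec_eval_add rec_eval_triangle) simp_all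

definition diagonal :: "nat \<Rightarrow> nat" where
  "diagonal m = (LEAST s. m < triangle (Suc s))"

lemma diagonal_bounds: "triangle (diagonal m) \<le> m" "m < triangle (Suc (diagonal m))"
proof -
  have ex: "m < triangle (Suc m)"
    by (induction m) auto
  show "m < triangle (Suc (diagonal m))"
    unfolding diagonal_def by (rule LeastI[of "\<lambda>s. m < triangle (Suc s)", OF ex])
  show "triangle (diagonal m) \<le> m"
  proof (cases "diagonal m")
    case (Suc k)
    then have "\<not> m < triangle (Suc k)"
      unfolding diagonal_def by (metis lessI not_less_Least)
    then show ?thesis using Suc by simp
  qed simp
qed

lemma prod_decode_diagonal:
  "prod_decode m = (m - triangle (diagonal m), diagonal m - (m - triangle (diagonal m)))"
proof -
  have "prod_encode (m - triangle (diagonal m), diagonal m - (m - triangle (diagonal m))) = m"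
    using diagonal_bounds[of m] by (simp add: prod_encode_def)
  then show ?thesis
    by (metis prod_encode_inverse)
qed

definition rf_diagonal_test :: recf where
  "rf_diagonal_test = Comp rf_sub [Comp Succ [Proj 1], Comp rf_triangle [Comp Succ [Proj 0]]]"
definition rf_diagonal :: recf where
  "rf_diagonal = Mn rf_diagonal_test"

lemma rec_eval_diagonal: "z = diagonal m \<Longrightarrow> rec_eval rf_diagonal [m] z"
proof -
  assume z: "z = diagonal m"
  have test: "rec_eval rf_diagonal_test [s, m] (Suc m - triangle (Suc s))" for s
    unfolding rf_diagonal_test_def by (intro rec_eval_basic rec_eval_sub rec_eval_triangle) (simp+)
  have "0 < Suc m - triangle (Suc s)" if "s < diagonal m" for s
    using that unfolding diagonal_def
    by (metis not_less_Least not_less zero_less_diff less_Suc_eq_le)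
  then have "\<forall>s < diagonal m. \<exists>y>0. rec_eval rf_diagonal_test [s, m] y"
    using test by blast
  moreover have "rec_eval rf_diagonal_test [diagonal m, m] 0"
    using test[of "diagonal m"] diagonal_bounds(2)[of m] by simp
  ultimately show ?thesis
    unfolding z rf_diagonal_def by (intro rec_eval.intros(7))
qed

definition rf_fst :: recf where
  "rf_fst = Comp rf_sub [Proj 0, Comp rf_triangle [rf_diagonal]]"
definition rf_snd :: recf where
  "rf_snd = Comp rf_sub [rf_diagonal, rf_fst]"

lemma rec_eval_fst: "z = fst (prod_decode m) \<Longrightarrow> rec_eval rf_fst [m] z"
  unfolding rf_fst_def prod_decode_diagonal[of m]
  by (intro rec_eval_basic rec_eval_sub rec_eval_triangle rec_eval_diagonal) simp_all

lemma rec_eval_snd: "z = snd (prod_decode m) \<Longrightarrow> rec_eval rf_snd [m] z"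
  unfolding rf_snd_def
  by (rule rec_eval_Comp2[OF rec_eval_diagonal[OF refl] rec_eval_fst[OF refl] rec_eval_sub])
    (simp add: prod_decode_diagonal[of m])

definition rf_if :: recf where
  "rf_if = Prim (Proj 0) (Proj 3)"

lemma rec_eval_if: "z = (if b = 0 then x else y) \<Longrightarrow> rec_eval rf_if [b, x, y] z"
proof -
  assume "z = (if b = 0 then x else y)"
  moreover have "rec_eval rf_if [b, x, y] (rec_nat x (\<lambda>n r. y) b)"
    unfolding rf_if_def by (rule rec_eval_Prim; intro rec_eval_basic) simp_all
  ultimately show ?thesis by (cases b) auto
qed

section \<open>Recursion on list codes\<close>

definition list_code_hd :: "nat \<Rightarrow> nat" where
  "list_code_hd t = fst (prod_decode (t - 1))"

definition list_code_tl :: "nat \<Rightarrow> nat" where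
  "list_code_tl t = snd (prod_decode (t - 1))"

lemma list_code_hd_Suc_prod_encode [simp]: "list_code_hd (Suc (prod_encode (x, y))) = x"
  by (simp add: list_code_hd_def)

lemma list_code_tl_list_encode [simp]: "list_code_tl (list_encode xs) = list_encode (tl xs)"
proof (cases xs)
  case Nil
  have "prod_decode 0 = (0, 0)"
    by (simp add: prod_decode_def prod_decode_aux.simps)
  then show ?thesis using Nil by (simp add: list_code_tl_def)
qed (simp add: list_code_tl_def)

lemma list_code_tl_funpow: "(list_code_tl ^^ i) (list_encode xs) = list_encode (drop i xs)"
  by (induction i arbitrary: xs) (simp_all add: funpow_Suc_right drop_Suc tl_drop)

lemma length_le_list_encode: "length xs \<le> list_encode xs"
  by (induction xs) (auto intro: le_trans[OF _ le_prod_encode_2])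

definition rf_hd :: recf where
  "rf_hd = Comp rf_fst [rf_pred]"
definition rf_tl :: recf where
  "rf_tl = Comp rf_snd [rf_pred]"
definition rf_tl_funpow :: recf where
  "rf_tl_funpow = Prim (Proj 0) (Comp rf_tl [Proj 0])"

lemma rec_eval_hd: "z = list_code_hd t \<Longrightarrow> rec_eval rf_hd [t] z"
  unfolding rf_hd_def list_code_hd_def by (intro rec_eval_Comp1 rec_eval_fst rec_eval_pred) simp_all

lemma rec_eval_tl: "z = list_code_tl t \<Longrightarrow> rec_eval rf_tl [t] z"
  unfolding rf_tl_def list_code_tl_def by (intro rec_eval_Comp1 rec_eval_snd rec_eval_pred) simp_all

lemma rec_eval_tl_funpow: "z = (list_code_tl ^^ i) c \<Longrightarrow> rec_eval rf_tl_funpow [i, c] z"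
proof -
  assume "z = (list_code_tl ^^ i) c"
  moreover have "rec_eval rf_tl_funpow [i, c] (rec_nat c (\<lambda>n y. list_code_tl y) i)"
    unfolding rf_tl_funpow_def by (rule rec_eval_Prim; intro rec_eval_basic rec_eval_tl) simp_all
  moreover have "rec_nat c (\<lambda>n y. list_code_tl y) i = (list_code_tl ^^ i) c"
    by (induction i) auto
  ultimately show ?thesis by simp
qed

text \<open>A right fold over the list coded by c is computed by primitive recursion on c itself:
  the i-th step processes the suffix of length i, and c bounds the length of the list.\<close>

definition foldr_code_step :: "(nat \<Rightarrow> nat \<Rightarrow> nat) \<Rightarrow> nat \<Rightarrow> nat \<Rightarrow> nat \<Rightarrow> nat" where
  "foldr_code_step s c i y =
    (let t = (list_code_tl ^^ (c - Suc i)) c in if t = 0 then y else s (list_code_hd t) y)"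

lemma foldr_code_step_iterate:
  assumes "i \<le> list_encode xs"
  shows "rec_nat 0 (foldr_code_step s (list_encode xs)) i
    = foldr s (drop (list_encode xs - i) xs) 0"
  using assms
proof (induction i)
  case 0
  then show ?case using length_le_list_encode[of xs] by simp
next
  case (Suc i)
  define c where "c = list_encode xs"
  define j where "j = c - Suc i"
  have IH: "rec_nat 0 (foldr_code_step s c) i = foldr s (drop (Suc j) xs) 0"
    using Suc unfolding j_def c_def by (simp add: Suc_diff_Suc)
  have "rec_nat 0 (foldr_code_step s c) (Suc i)
      = foldr_code_step s c i (foldr s (drop (Suc j) xs) 0)"
    using IH by simp
  also have "\<dots> = foldr s (drop j xs) 0"
  proof (cases "j < length xs")
    case True
    then have "drop j xs = xs ! j # drop (Suc j) xs"
      by (rule Cons_nth_drop_Suc[symmetric])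
    then show ?thesis
      by (simp add: foldr_code_step_def list_code_tl_funpow c_def j_def[unfolded c_def, symmetric])
  next
    case False
    then show ?thesis
      by (simp add: foldr_code_step_def list_code_tl_funpow c_def j_def[unfolded c_def, symmetric])
  qed
  finally show ?case
    unfolding c_def j_def .
qed

definition rf_suffix :: recf where
  "rf_suffix = Comp rf_tl_funpow [Comp rf_sub [Proj 2, Comp Succ [Proj 1]], Proj 2]"
definition rf_foldr_code_step :: "recf \<Rightarrow> recf" where
  "rf_foldr_code_step S = Comp rf_if [rf_suffix, Proj 0, Comp S [Comp rf_hd [rf_suffix], Proj 0]]"
definition rf_foldr :: "recf \<Rightarrow> recf" where
  "rf_foldr S = Comp (Prim Zero (rf_foldr_code_step S)) [Proj 0, Proj 0]"

lemma total_recursive_foldr: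
  assumes S: "\<And>x y. rec_eval S [x, y] (s x y)"
  shows "total_recursive (\<lambda>n. foldr s (list_decode n) 0)"
  unfolding total_recursive_def
proof (intro exI allI)
  fix n
  have suffix: "rec_eval rf_suffix [y, i, c] ((list_code_tl ^^ (c - Suc i)) c)" for y i c
    unfolding rf_suffix_def by (intro rec_eval_basic rec_eval_tl_funpow rec_eval_sub) (simp+)
  have "rec_eval (Comp rf_hd [rf_suffix]) [y, i, c]
      (list_code_hd ((list_code_tl ^^ (c - Suc i)) c))" for y i c
    by (rule rec_eval_Comp1[OF suffix rec_eval_hd[OF refl]])
  then have "rec_eval (Comp S [Comp rf_hd [rf_suffix], Proj 0]) [y, i, c]
      (s (list_code_hd ((list_code_tl ^^ (c - Suc i)) c)) y)" for y i c
    by (rule rec_eval_Comp2[OF _ rec_eval_Proj S]) simp_all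
  then have "rec_eval (rf_foldr_code_step S) [y, i, c] (foldr_code_step s c i y)" for y i c
    unfolding rf_foldr_code_step_def foldr_code_step_def Let_def
    by (intro rec_eval_Comp3[OF suffix _ _ rec_eval_if] rec_eval_Proj) simp_all
  then have "rec_eval (Prim Zero (rf_foldr_code_step S)) [n, n]
      (rec_nat 0 (foldr_code_step s n) n)"
    by (intro rec_eval_Prim rec_eval_Zero)
  moreover have "rec_nat 0 (foldr_code_step s n) n = foldr s (list_decode n) 0"
    using foldr_code_step_iterate[of n "list_decode n" s] by simp
  ultimately show "rec_eval (rf_foldr S) [n] (foldr s (list_decode n) 0)"
    unfolding rf_foldr_def by (intro rec_eval_Comp2[OF rec_eval_Proj rec_eval_Proj]) simp_all
qed

lemma total_recursive_map_filter:
  assumes "total_recursive (\<lambda>x. of_bool (P x))" and "total_recursive v"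
  shows "total_recursive (\<lambda>n. list_encode (map v (filter P (list_decode n))))"
proof -
  obtain KP V where KP: "\<And>x. rec_eval KP [x] (of_bool (P x))" and V: "\<And>x. rec_eval V [x] (v x)"
    using assms unfolding total_recursive_def by blast
  define s where "s x y = (if P x then Suc (prod_encode (v x, y)) else y)" for x y
  have fold: "list_encode (map v (filter P xs)) = foldr s xs 0" for xs
    by (induction xs) (simp_all add: s_def)
  have step: "rec_eval (Comp rf_if [Comp KP [Proj 0], Proj 1,
      Comp Succ [Comp rf_prod_encode [Comp V [Proj 0], Proj 1]]]) [x, y] (s x y)" for x y
  proof -
    have test: "rec_eval (Comp KP [Proj 0]) [x, y] (of_bool (P x))"
      by (rule rec_eval_Comp1[OF rec_eval_Proj KP]) simp_all
    have "rec_eval (Comp V [Proj 0]) [x, y] (v x)"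
      by (rule rec_eval_Comp1[OF rec_eval_Proj V]) simp_all
    then have cons: "rec_eval (Comp Succ [Comp rf_prod_encode [Comp V [Proj 0], Proj 1]]) [x, y]
        (Suc (prod_encode (v x, y)))"
      by (intro rec_eval_Comp1[OF _ rec_eval_Succ] rec_eval_Comp2[OF _ rec_eval_Proj
          rec_eval_prod_encode]) simp_all
    have "rec_eval (Proj 1) [x, y] y"
      by (rule rec_eval_Proj) simp_all
    then show ?thesis
      by (rule rec_eval_Comp3[OF test _ cons rec_eval_if]) (simp add: s_def)
  qed
  show ?thesis
    using total_recursive_foldr[OF step] by (simp add: fold)
qed

lemma total_recursive_Suc: "total_recursive Suc"
  unfolding total_recursive_def by (intro exI[of _ Succ] allI rec_eval_Succ) simp

lemma total_recursive_pred: "total_recursive (\<lambda>x. x - 1)"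
  unfolding total_recursive_def by (intro exI[of _ rf_pred] allI rec_eval_pred) simp

lemma total_recursive_of_bool_True: "total_recursive (\<lambda>x. of_bool True)"
  unfolding total_recursive_def
  by (intro exI[of _ "Comp Succ [Zero]"] allI rec_eval_Comp1[OF rec_eval_Zero rec_eval_Succ]) simp

lemma total_recursive_of_bool_nonzero: "total_recursive (\<lambda>x. of_bool (x \<noteq> 0))"
  unfolding total_recursive_def
proof (intro exI allI)
  fix x :: nat
  have "rec_eval (Prim Zero (Comp Succ [Zero])) [x] (rec_nat 0 (\<lambda>n y. 1) x)"
    by (intro rec_eval_Prim rec_eval_Zero rec_eval_Comp1[OF rec_eval_Zero rec_eval_Succ]) simp
  then show "rec_eval (Prim Zero (Comp Succ [Zero])) [x] (of_bool (x \<noteq> 0))"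
    by (cases x) simp_all
qed

section \<open>Computable operators on Baire space\<close>

lemma length_pref [simp]: "length (pref p n) = n"
  by (simp add: pref_def)

lemma nth_pref [simp]: "i < n \<Longrightarrow> pref p n ! i = p i"
  by (simp add: pref_def)

lemma pref_Suc: "pref p (Suc n) = pref p n @ [p n]"
  by (simp add: pref_def)

lemma all_nth_eq_iff_pref: "(\<forall>i < length w. w ! i = q i) \<longleftrightarrow> w = pref q (length w)"
  by (metis length_pref nth_equalityI nth_pref)

definition approximates :: "(nat list \<Rightarrow> nat list) \<Rightarrow> baire \<Rightarrow> baire \<Rightarrow> bool" where
  "approximates h p q \<longleftrightarrow>
     (\<forall>n. \<exists>m. n < length (h (pref p m))) \<and> (\<forall>m. h (pref p m) = pref q (length (h (pref p m))))"

lemma computable_iff_approximates: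
  "computable F \<longleftrightarrow> (\<exists>h. total_recursive (\<lambda>n. list_encode (h (list_decode n))) \<and>
     (\<forall>v w. prefix v w \<longrightarrow> prefix (h v) (h w)) \<and> (\<forall>p q. F p = Some q \<longrightarrow> approximates h p q))"
  unfolding computable_def approximates_def by (simp add: all_nth_eq_iff_pref)

lemma total_recursive_word_comp:
  assumes "total_recursive (\<lambda>n. list_encode (a (list_decode n)))"
    and "total_recursive (\<lambda>n. list_encode (b (list_decode n)))"
  shows "total_recursive (\<lambda>n. list_encode (a (b (list_decode n))))"
  using total_recursive_comp[OF assms] by simp

definition count_below :: "nat set \<Rightarrow> nat \<Rightarrow> nat" where
  "count_below S n = card {i \<in> S. i < n}"

lemma count_below_mono: "m \<le> n \<Longrightarrow> count_below S m \<le> count_below S n"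
  unfolding count_below_def by (rule card_mono) auto

lemma count_below_Suc:
  "count_below S (Suc n) = (if n \<in> S then Suc (count_below S n) else count_below S n)"
proof -
  have "{i \<in> S. i < Suc n} = (if n \<in> S then insert n {i \<in> S. i < n} else {i \<in> S. i < n})"
    by (auto simp: less_Suc_eq)
  then show ?thesis
    unfolding count_below_def by auto
qed

lemma count_below_enumerate:
  assumes "infinite S"
  shows "count_below S (enumerate S k) = k"
proof -
  have "{i \<in> S. i < enumerate S k} = enumerate S ` {..<k}"
    using assms by (auto simp: enumerate_in_set dest: enumerate_Ex[OF assms])
  moreover have "inj_on (enumerate S) {..<k}"
    using inj_enumerate[OF assms] by (rule inj_on_subset) simp
  ultimately show ?thesis
    unfolding count_below_def by (simp add: card_image)
qed

lemma less_count_below: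
  assumes "infinite S" and "enumerate S n < L"
  shows "n < count_below S L"
proof -
  have "count_below S (Suc (enumerate S n)) = Suc n"
    using assms(1) by (simp add: count_below_Suc count_below_enumerate enumerate_in_set)
  moreover have "count_below S (Suc (enumerate S n)) \<le> count_below S L"
    using assms(2) by (simp add: count_below_mono)
  ultimately show ?thesis
    by simp
qed

lemma enumerate_count_below: "infinite S \<Longrightarrow> n \<in> S \<Longrightarrow> enumerate S (count_below S n) = n"
  by (metis count_below_enumerate enumerate_Ex)

lemma enumerate_UNIV: "enumerate (UNIV :: nat set) k = k"
  using count_below_enumerate[of "UNIV :: nat set" k] by (simp add: count_below_def)

text \<open>Both p - 1 (keep the nonzero entries, decrement them) and p + 1 (keep everything,
  increment) are instances, so their computability is proved once.\<close>

definition filter_map_seq :: "(nat \<Rightarrow> bool) \<Rightarrow> (nat \<Rightarrow> nat) \<Rightarrow> baire \<Rightarrow> baire option" where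
  "filter_map_seq P v p = (if infinite {n. P (p n)}
     then Some (\<lambda>i. v (p (enumerate {n. P (p n)} i))) else None)"

lemma map_filter_pref:
  assumes S: "infinite S" and S_def: "S = {n. P (p n)}"
  shows "map v (filter P (pref p n)) = pref (\<lambda>i. v (p (enumerate S i))) (count_below S n)"
proof (induction n)
  case 0
  then show ?case by (simp add: pref_def count_below_def)
next
  case (Suc n)
  then show ?case
    using enumerate_count_below[OF S, of n]
    by (auto simp: pref_Suc count_below_Suc S_def)
qed

lemma computable_bind_filter_map_seq:
  assumes "computable K" and P: "total_recursive (\<lambda>x. of_bool (P x))" and v: "total_recursive v"
  shows "computable (\<lambda>p. Option.bind (K p) (filter_map_seq P v))"
proof -
  obtain h where h_rec: "total_recursive (\<lambda>n. list_encode (h (list_decode n)))"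
    and h_mono: "\<forall>v w. prefix v w \<longrightarrow> prefix (h v) (h w)"
    and h_approx: "\<forall>p r. K p = Some r \<longrightarrow> approximates h p r"
    using assms(1) unfolding computable_iff_approximates by blast
  let ?h = "\<lambda>w. map v (filter P (h w))"
  have "approximates ?h p q" if Kpq: "Option.bind (K p) (filter_map_seq P v) = Some q" for p q
  proof -
    define S where "S r = {n. P (r n)}" for r :: baire
    obtain r where r: "K p = Some r" "infinite (S r)" "q = (\<lambda>i. v (r (enumerate (S r) i)))"
      using Kpq by (auto simp: filter_map_seq_def S_def split: if_splits bind_splits)
    have "approximates h p r"
      using h_approx r(1) by blast
    then have unbounded: "\<forall>n. \<exists>m. n < length (h (pref p m))"
      and h_pref: "h (pref p m) = pref r (length (h (pref p m)))" for m
      unfolding approximates_def by blast+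
    have h'_pref: "?h (pref p m) = pref q (count_below (S r) (length (h (pref p m))))" for m
      by (subst h_pref) (simp add: map_filter_pref[where P = P and p = r, OF r(2) S_def] r(3))
    have "\<exists>m. n < length (?h (pref p m))" for n
    proof -
      obtain m where "enumerate (S r) n < length (h (pref p m))"
        using unbounded by blast
      then have "n < length (?h (pref p m))"
        unfolding h'_pref length_pref by (rule less_count_below[OF r(2)])
      then show ?thesis ..
    qed
    then show ?thesis
      unfolding approximates_def using h'_pref by simp
  qed
  moreover have "total_recursive (\<lambda>n. list_encode (?h (list_decode n)))"
    by (rule total_recursive_word_comp[OF total_recursive_map_filter[OF P v] h_rec])
  moreover have "prefix (?h w) (?h w')" if "prefix w w'" for w w'
    using h_mono that by (simp add: map_mono_prefix filter_mono_prefix)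
  ultimately show ?thesis
    unfolding computable_iff_approximates by (intro exI[of _ ?h]) blast
qed

lemma computable_filter_map_seq_bind:
  assumes "computable H" and P: "total_recursive (\<lambda>x. of_bool (P x))" and v: "total_recursive v"
  shows "computable (\<lambda>p. Option.bind (filter_map_seq P v p) H)"
proof -
  obtain h where h_rec: "total_recursive (\<lambda>n. list_encode (h (list_decode n)))"
    and h_mono: "\<forall>v w. prefix v w \<longrightarrow> prefix (h v) (h w)"
    and h_approx: "\<forall>r q. H r = Some q \<longrightarrow> approximates h r q"
    using assms(1) unfolding computable_iff_approximates by blast
  let ?h = "\<lambda>w. h (map v (filter P w))"
  have "approximates ?h p q" if "Option.bind (filter_map_seq P v p) H = Some q" for p q
  proof -
    define S where "S = {n. P (p n)}"
    define r where "r = (\<lambda>i. v (p (enumerate S i)))"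
    have S: "infinite S" and "H r = Some q"
      using that by (auto simp: filter_map_seq_def S_def r_def split: if_splits)
    then have "approximates h r q"
      using h_approx by blast
    then have unbounded: "\<forall>n. \<exists>m. n < length (h (pref r m))"
      and h_pref: "h (pref r m) = pref q (length (h (pref r m)))" for m
      unfolding approximates_def by blast+
    have h'_pref: "?h (pref p m) = h (pref r (count_below S m))" for m
      by (simp add: map_filter_pref[where P = P and p = p, OF S S_def] r_def)
    have "\<exists>m. n < length (?h (pref p m))" for n
    proof -
      obtain m where "n < length (h (pref r m))"
        using unbounded by blast
      then show ?thesis
        using h'_pref[of "enumerate S m"] count_below_enumerate[OF S] by metis
    qed
    then show ?thesis
      unfolding approximates_def using h'_pref h_pref by simp
  qed
  moreover have "total_recursive (\<lambda>n. list_encode (?h (list_decode n)))"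
    by (rule total_recursive_word_comp[OF h_rec total_recursive_map_filter[OF P v]])
  moreover have "prefix (?h w) (?h w')" if "prefix w w'" for w w'
    using h_mono that by (simp add: map_mono_prefix filter_mono_prefix)
  ultimately show ?thesis
    unfolding computable_iff_approximates by (intro exI[of _ ?h]) blast
qed

definition minus1_partial :: "baire \<Rightarrow> baire option" where
  "minus1_partial = filter_map_seq (\<lambda>x. x \<noteq> 0) (\<lambda>x. x - 1)"

lemma filter_map_seq_True_Suc: "filter_map_seq (\<lambda>_. True) Suc = (\<lambda>q. Some (Suc \<circ> q))"
  by (simp add: fun_eq_iff filter_map_seq_def enumerate_UNIV)

lemma minus1_partial_Suc: "minus1_partial (Suc \<circ> q) = Some q"
  by (simp add: minus1_partial_def filter_map_seq_def enumerate_UNIV)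

lemma computable_bind_Suc:
  "computable K \<Longrightarrow> computable (\<lambda>p. Option.bind (K p) (\<lambda>r. Some (Suc \<circ> r)))"
  using computable_bind_filter_map_seq[OF _ total_recursive_of_bool_True total_recursive_Suc]
  by (simp add: filter_map_seq_True_Suc)

lemma computable_comp_Suc: "computable H \<Longrightarrow> computable (\<lambda>q. H (Suc \<circ> q))"
  using computable_filter_map_seq_bind[OF _ total_recursive_of_bool_True total_recursive_Suc]
  by (simp add: filter_map_seq_True_Suc)

lemma computable_bind_minus1_partial:
  "computable K \<Longrightarrow> computable (\<lambda>p. Option.bind (K p) minus1_partial)"
  unfolding minus1_partial_def
  by (rule computable_bind_filter_map_seq[OF _ total_recursive_of_bool_nonzero
      total_recursive_pred])

lemma computable_minus1_partial_bind:
  "computable H \<Longrightarrow> computable (\<lambda>q. Option.bind (minus1_partial q) H)"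
  unfolding minus1_partial_def
  by (rule computable_filter_map_seq_bind[OF _ total_recursive_of_bool_nonzero
      total_recursive_pred])

section \<open>Realizers and reductions\<close>

lemma realizesI:
  "(\<And>p x. \<delta>X p = Some x \<Longrightarrow> x \<in> pdom f \<Longrightarrow> \<exists>q y. F p = Some q \<and> \<delta>Y q = Some y \<and> y \<in> f x)
    \<Longrightarrow> realizes \<delta>X \<delta>Y F f"
  unfolding realizes_def by blast

lemma realizesD:
  "realizes \<delta>X \<delta>Y F f \<Longrightarrow> \<delta>X p = Some x \<Longrightarrow> x \<in> pdom f
    \<Longrightarrow> \<exists>q y. F p = Some q \<and> \<delta>Y q = Some y \<and> y \<in> f x"
  unfolding realizes_def by blast

lemma realizes_cong:
  "realizes \<delta>X \<delta>Y F f \<Longrightarrow> (\<And>p x. \<delta>X p = Some x \<Longrightarrow> x \<in> pdom f \<Longrightarrow> F' p = F p)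
    \<Longrightarrow> realizes \<delta>X \<delta>Y F' f"
  unfolding realizes_def by metis

lemma realizes_fun_upd:
  assumes "realizes \<delta>U \<delta>V G g" and "\<delta>V q = Some v"
    and "\<And>u. \<delta>U r = Some u \<Longrightarrow> u \<in> pdom g \<Longrightarrow> v \<in> g u"
  shows "realizes \<delta>U \<delta>V (G(r := Some q)) g"
  using assms unfolding realizes_def by auto

lemma realizer_with_valid_answers:
  assumes "represented \<delta>V"
  obtains G where "realizes \<delta>U \<delta>V G g" and "\<And>r. \<exists>q v. G r = Some q \<and> \<delta>V q = Some v"
proof
  define answers where
    "answers r = {q. \<exists>v. \<delta>V q = Some v \<and> (\<forall>u. \<delta>U r = Some u \<and> u \<in> pdom g \<longrightarrow> v \<in> g u)}" for r
  have "answers r \<noteq> {}" for r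
  proof (cases "\<exists>u. \<delta>U r = Some u \<and> u \<in> pdom g")
    case True
    then obtain u v where "\<delta>U r = Some u" "v \<in> g u"
      by (auto simp: pdom_def)
    moreover obtain q where "\<delta>V q = Some v"
      using assms unfolding represented_def by blast
    ultimately show ?thesis
      unfolding answers_def by auto
  next
    case False
    obtain q v where "\<delta>V q = Some v"
      using assms unfolding represented_def by blast
    then show ?thesis
      using False unfolding answers_def by auto
  qed
  then have answer: "(SOME q. q \<in> answers r) \<in> answers r" for r
    by (simp add: some_in_eq)
  show "realizes \<delta>U \<delta>V (\<lambda>r. Some (SOME q. q \<in> answers r)) g"
  proof (rule realizesI)
    fix r u assume "\<delta>U r = Some u" "u \<in> pdom g"
    then show "\<exists>q v. Some (SOME q. q \<in> answers r) = Some q \<and> \<delta>V q = Some v \<and> v \<in> g u"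
      using answer[of r] unfolding answers_def by blast
  qed
  show "\<exists>q v. Some (SOME q. q \<in> answers r) = Some q \<and> \<delta>V q = Some v" for r
    using answer[of r] unfolding answers_def by blast
qed

definition reduced_realizer ::
    "(baire \<Rightarrow> baire option) \<Rightarrow> (baire \<Rightarrow> baire option) \<Rightarrow> (baire \<Rightarrow> baire option) \<Rightarrow>
     baire \<Rightarrow> baire option" where
  [simp]: "reduced_realizer H G K p = Option.bind (K p) (\<lambda>r. Option.bind (G r) H)"

definition reduces_via ::
    "(baire \<Rightarrow> baire option) \<Rightarrow> (baire \<Rightarrow> baire option) \<Rightarrow>
     (baire \<Rightarrow> 'x option) \<Rightarrow> (baire \<Rightarrow> 'y option) \<Rightarrow> ('x \<Rightarrow> 'y set) \<Rightarrow>
     (baire \<Rightarrow> 'u option) \<Rightarrow> (baire \<Rightarrow> 'v option) \<Rightarrow> ('u \<Rightarrow> 'v set) \<Rightarrow> bool" where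
  "reduces_via H K \<delta>X \<delta>Y f \<delta>U \<delta>V g \<longleftrightarrow> (\<forall>G. realizes \<delta>U \<delta>V G g \<longrightarrow>
     realizes \<delta>X \<delta>Y (reduced_realizer H G K) f)"

lemma sW_le_iff_reduces_via:
  "sW_le \<delta>X \<delta>Y f \<delta>U \<delta>V g \<longleftrightarrow>
     (\<exists>H K. computable H \<and> computable K \<and> reduces_via H K \<delta>X \<delta>Y f \<delta>U \<delta>V g)"
  unfolding sW_le_def reduces_via_def reduced_realizer_def ..

lemma reduces_via_transfer:
  assumes "reduces_via H K \<delta>X \<delta>Y f \<delta>U \<delta>V g"
    and "\<And>G'. realizes \<delta>U' \<delta>V' G' g' \<Longrightarrow> \<exists>G. realizes \<delta>U \<delta>V G g \<and>
      (\<forall>p x. \<delta>X p = Some x \<longrightarrow> x \<in> pdom f \<longrightarrow>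
        reduced_realizer H' G' K' p = reduced_realizer H G K p)"
  shows "reduces_via H' K' \<delta>X \<delta>Y f \<delta>U' \<delta>V' g'"
  unfolding reduces_via_def
proof (intro allI impI)
  fix G' assume "realizes \<delta>U' \<delta>V' G' g'"
  then obtain G where G: "realizes \<delta>U \<delta>V G g" and agree: "\<forall>p x. \<delta>X p = Some x \<longrightarrow> x \<in> pdom f \<longrightarrow>
      reduced_realizer H' G' K' p = reduced_realizer H G K p"
    using assms(2) by blast
  have "realizes \<delta>X \<delta>Y (reduced_realizer H G K) f"
    using assms(1) G unfolding reduces_via_def by blast
  then show "realizes \<delta>X \<delta>Y (reduced_realizer H' G' K') f"
    by (rule realizes_cong) (use agree in blast)
qed

lemma diverse_reduction_queries_nontrivial:
  assumes "diverse f" and "represented \<delta>X" and red: "reduces_via H K \<delta>X \<delta>Y f \<delta>U \<delta>V g"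
    and G0: "realizes \<delta>U \<delta>V G0 g" and G0_valid: "\<And>r. \<exists>q v. G0 r = Some q \<and> \<delta>V q = Some v"
    and p: "\<delta>X p = Some x" "x \<in> pdom f"
  obtains r u where "K p = Some r" "\<delta>U r = Some u" "u \<in> pdom g" "g u \<noteq> UNIV"
proof -
  obtain y where y: "y \<in> pdom f" "f x \<inter> f y = {}"
    using \<open>diverse f\<close> p(2) unfolding diverse_def by blast
  obtain p' where p': "\<delta>X p' = Some y"
    using \<open>represented \<delta>X\<close> unfolding represented_def by blast
  have R0: "realizes \<delta>X \<delta>Y (reduced_realizer H G0 K) f"
    using red G0 unfolding reduces_via_def by blast
  obtain r where r: "K p = Some r"
    using realizesD[OF R0 p] by (auto split: bind_splits)
  obtain r' q' s' b' where r': "K p' = Some r'" "G0 r' = Some q'" "H q' = Some s'"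
    and b': "\<delta>Y s' = Some b'" "b' \<in> f y"
    using realizesD[OF R0 p' y(1)] by (auto split: bind_splits)
  obtain v' where v': "\<delta>V q' = Some v'"
    using G0_valid[of r'] r'(2) by auto
  have "\<exists>u. \<delta>U r = Some u \<and> u \<in> pdom g \<and> g u \<noteq> UNIV"
  proof (rule ccontr)
    assume "\<nexists>u. \<delta>U r = Some u \<and> u \<in> pdom g \<and> g u \<noteq> UNIV"
    then have "realizes \<delta>U \<delta>V (G0(r := Some q')) g"
      by (intro realizes_fun_upd[OF G0 v']) auto
    then have "realizes \<delta>X \<delta>Y (reduced_realizer H (G0(r := Some q')) K) f"
      using red unfolding reduces_via_def by blast
    moreover have "reduced_realizer H (G0(r := Some q')) K p = Some s'"
      using r r'(3) by simp
    ultimately have "b' \<in> f x"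
      using realizesD[of \<delta>X \<delta>Y _ f, OF _ p] b'(1) by fastforce
    then show False
      using b'(2) y(2) by blast
  qed
  then show ?thesis
    using r that by blast
qed

section \<open>Completion\<close>

lemma compl_rep_eq: "compl_rep \<delta> p = Some (Option.bind (minus1_partial p) \<delta>)"
  by (simp add: compl_rep_def minus1_partial_def filter_map_seq_def minus1_def)

lemma represented_compl_rep:
  assumes "represented \<delta>"
  shows "represented (compl_rep \<delta>)"
  unfolding represented_def
proof
  fix w
  show "\<exists>p. compl_rep \<delta> p = Some w"
  proof (cases w)
    case None
    then show ?thesis
      by (intro exI[of _ "\<lambda>_. 0"]) (simp add: compl_rep_def)
  next
    case (Some u)
    then obtain q where "\<delta> q = Some u"
      using assms unfolding represented_def by blast
    then show ?thesis
      using Some by (intro exI[of _ "Suc \<circ> q"]) (simp add: compl_rep_eq minus1_partial_Suc)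
  qed
qed

lemma pdom_compl_prob: "pdom (compl_prob g) = UNIV"
  by (auto simp: pdom_def compl_prob_def split: option.splits)

lemma compl_prob_neq_UNIV: "compl_prob g w \<noteq> UNIV \<Longrightarrow> \<exists>u. w = Some u \<and> g u \<noteq> {}"
  by (cases w) (auto simp: compl_prob_def)

lemma compl_prob_Some: "g u \<noteq> {} \<Longrightarrow> compl_prob g (Some u) = Some ` g u"
  by (simp add: compl_prob_def)

lemma sW_le_compl_prob_if_sW_le:
  assumes "sW_le \<delta>X \<delta>Y f \<delta>U \<delta>V g"
  shows "sW_le \<delta>X \<delta>Y f (compl_rep \<delta>U) (compl_rep \<delta>V) (compl_prob g)"
proof -
  obtain H K where HK: "computable H" "computable K" and red: "reduces_via H K \<delta>X \<delta>Y f \<delta>U \<delta>V g"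
    using assms unfolding sW_le_iff_reduces_via by blast
  define K' where "K' = (\<lambda>p. Option.bind (K p) (\<lambda>r. Some (Suc \<circ> r)))"
  define H' where "H' = (\<lambda>q. Option.bind (minus1_partial q) H)"
  have "reduces_via H' K' \<delta>X \<delta>Y f (compl_rep \<delta>U) (compl_rep \<delta>V) (compl_prob g)"
  proof (rule reduces_via_transfer[OF red])
    fix G' assume G': "realizes (compl_rep \<delta>U) (compl_rep \<delta>V) G' (compl_prob g)"
    define G where "G r = Option.bind (G' (Suc \<circ> r)) minus1_partial" for r
    have "realizes \<delta>U \<delta>V G g"
    proof (rule realizesI)
      fix r u assume r: "\<delta>U r = Some u" and u: "u \<in> pdom g"
      have "compl_rep \<delta>U (Suc \<circ> r) = Some (Some u)"
        using r by (simp add: compl_rep_eq minus1_partial_Suc)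
      then obtain q w where q: "G' (Suc \<circ> r) = Some q" "compl_rep \<delta>V q = Some w"
        and w: "w \<in> compl_prob g (Some u)"
        using realizesD[OF G'] pdom_compl_prob by blast
      then obtain v where "w = Some v" "v \<in> g u"
        using u compl_prob_Some[of g u] by (auto simp: pdom_def)
      then show "\<exists>q y. G r = Some q \<and> \<delta>V q = Some y \<and> y \<in> g u"
        using q by (auto simp: G_def compl_rep_eq split: bind_splits)
    qed
    moreover have "reduced_realizer H' G' K' p = reduced_realizer H G K p" for p
      by (simp add: K'_def H'_def G_def)
    ultimately show "\<exists>G. realizes \<delta>U \<delta>V G g \<and> (\<forall>p x. \<delta>X p = Some x \<longrightarrow> x \<in> pdom f \<longrightarrow>
        reduced_realizer H' G' K' p = reduced_realizer H G K p)"
      by blast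
  qed
  moreover have "computable K'" "computable H'"
    unfolding K'_def H'_def using HK
    by (simp_all add: computable_bind_Suc computable_minus1_partial_bind)
  ultimately show ?thesis
    unfolding sW_le_iff_reduces_via by blast
qed

lemma sW_le_if_sW_le_compl_prob:
  assumes "diverse f" and "represented \<delta>X" and "represented \<delta>V"
    and "sW_le \<delta>X \<delta>Y f (compl_rep \<delta>U) (compl_rep \<delta>V) (compl_prob g)"
  shows "sW_le \<delta>X \<delta>Y f \<delta>U \<delta>V g"
proof -
  obtain H K where HK: "computable H" "computable K"
    and red: "reduces_via H K \<delta>X \<delta>Y f (compl_rep \<delta>U) (compl_rep \<delta>V) (compl_prob g)"
    using assms(4) unfolding sW_le_iff_reduces_via by blast
  obtain G0 where G0: "realizes (compl_rep \<delta>U) (compl_rep \<delta>V) G0 (compl_prob g)"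
    and G0_valid: "\<And>r. \<exists>q w. G0 r = Some q \<and> compl_rep \<delta>V q = Some w"
    using realizer_with_valid_answers[OF represented_compl_rep[OF assms(3)]] by blast
  have query: "\<exists>r r0 u. K p = Some r \<and> minus1_partial r = Some r0 \<and> \<delta>U r0 = Some u \<and> u \<in> pdom g"
    if px: "\<delta>X p = Some x" "x \<in> pdom f" for p x
  proof -
    obtain r w where "K p = Some r" "compl_rep \<delta>U r = Some w" "compl_prob g w \<noteq> UNIV"
      using diverse_reduction_queries_nontrivial[OF assms(1,2) red G0 G0_valid px] by blast
    then show ?thesis
      by (auto simp: compl_rep_eq pdom_def dest!: compl_prob_neq_UNIV split: bind_splits)
  qed
  define K' where "K' = (\<lambda>p. Option.bind (K p) minus1_partial)"
  define H' where "H' = (\<lambda>q. H (Suc \<circ> q))"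
  have "reduces_via H' K' \<delta>X \<delta>Y f \<delta>U \<delta>V g"
  proof (rule reduces_via_transfer[OF red])
    fix G assume G: "realizes \<delta>U \<delta>V G g"
    define G' where "G' r = Some (case Option.bind (minus1_partial r) G of
      None \<Rightarrow> (\<lambda>_. 0) | Some q \<Rightarrow> Suc \<circ> q)" for r
    have "realizes (compl_rep \<delta>U) (compl_rep \<delta>V) G' (compl_prob g)"
    proof (rule realizesI)
      fix r w assume r: "compl_rep \<delta>U r = Some w"
      show "\<exists>q y. G' r = Some q \<and> compl_rep \<delta>V q = Some y \<and> y \<in> compl_prob g w"
      proof (cases "compl_prob g w = UNIV")
        case False
        then obtain u where u: "w = Some u" "u \<in> pdom g"
          using compl_prob_neq_UNIV[OF False] by (auto simp: pdom_def)
        then obtain r0 where "minus1_partial r = Some r0" "\<delta>U r0 = Some u"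
          using r by (auto simp: compl_rep_eq split: bind_splits)
        moreover obtain q v where "G r0 = Some q" "\<delta>V q = Some v" "v \<in> g u"
          using realizesD[OF G \<open>\<delta>U r0 = Some u\<close> u(2)] by blast
        ultimately show ?thesis
          using u by (auto simp: G'_def compl_rep_eq minus1_partial_Suc compl_prob_Some pdom_def)
      qed (simp add: G'_def compl_rep_eq)
    qed
    moreover have "reduced_realizer H' G K' p = reduced_realizer H G' K p"
      if "\<delta>X p = Some x" "x \<in> pdom f" for p x
      using query[OF that] realizesD[OF G] by (fastforce simp: K'_def H'_def G'_def)
    ultimately show "\<exists>G'. realizes (compl_rep \<delta>U) (compl_rep \<delta>V) G' (compl_prob g) \<and>
        (\<forall>p x. \<delta>X p = Some x \<longrightarrow> x \<in> pdom f \<longrightarrow>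
        reduced_realizer H' G K' p = reduced_realizer H G' K p)"
      by blast
  qed
  moreover have "computable K'" "computable H'"
    unfolding K'_def H'_def using HK
    by (simp_all add: computable_bind_minus1_partial computable_comp_Suc)
  ultimately show ?thesis
    unfolding sW_le_iff_reduces_via by blast
qed

section \<open>Totalization\<close>

lemma realizes_totalization_imp_realizes:
  assumes "realizes \<delta>U \<delta>V G (totalization g)"
  shows "realizes \<delta>U \<delta>V G g"
proof (rule realizesI)
  fix r u assume "\<delta>U r = Some u" and u: "u \<in> pdom g"
  moreover have "u \<in> pdom (totalization g)" "totalization g u = g u"
    using u by (auto simp: pdom_def totalization_def)
  ultimately show "\<exists>q v. G r = Some q \<and> \<delta>V q = Some v \<and> v \<in> g u"
    using realizesD[OF assms] by metis
qed

lemma sW_le_totalization_if_sW_le: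
  assumes "sW_le \<delta>X \<delta>Y f \<delta>U \<delta>V g"
  shows "sW_le \<delta>X \<delta>Y f \<delta>U \<delta>V (totalization g)"
proof -
  obtain H K where "computable H" "computable K" and red: "reduces_via H K \<delta>X \<delta>Y f \<delta>U \<delta>V g"
    using assms unfolding sW_le_iff_reduces_via by blast
  moreover have "reduces_via H K \<delta>X \<delta>Y f \<delta>U \<delta>V (totalization g)"
    using red realizes_totalization_imp_realizes by (blast intro: reduces_via_transfer)
  ultimately show ?thesis
    unfolding sW_le_iff_reduces_via by blast
qed

lemma sW_le_if_sW_le_totalization:
  assumes "diverse f" and "represented \<delta>X" and "represented \<delta>V"
    and "sW_le \<delta>X \<delta>Y f \<delta>U \<delta>V (totalization g)"
  shows "sW_le \<delta>X \<delta>Y f \<delta>U \<delta>V g"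
proof -
  obtain H K where HK: "computable H" "computable K"
    and red: "reduces_via H K \<delta>X \<delta>Y f \<delta>U \<delta>V (totalization g)"
    using assms(4) unfolding sW_le_iff_reduces_via by blast
  obtain G0 where G0: "realizes \<delta>U \<delta>V G0 (totalization g)"
    and G0_valid: "\<And>r. \<exists>q v. G0 r = Some q \<and> \<delta>V q = Some v"
    using realizer_with_valid_answers[OF assms(3)] by blast
  have query: "\<exists>r u. K p = Some r \<and> \<delta>U r = Some u \<and> u \<in> pdom g"
    if px: "\<delta>X p = Some x" "x \<in> pdom f" for p x
  proof -
    obtain r u where "K p = Some r" "\<delta>U r = Some u" "totalization g u \<noteq> UNIV"
      using diverse_reduction_queries_nontrivial[OF assms(1,2) red G0 G0_valid px] by blast
    then show ?thesis
      by (auto simp: pdom_def totalization_def split: if_splits)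
  qed
  have "reduces_via H K \<delta>X \<delta>Y f \<delta>U \<delta>V g"
  proof (rule reduces_via_transfer[OF red])
    fix G assume G: "realizes \<delta>U \<delta>V G g"
    define G' where "G' r = (if \<exists>u. \<delta>U r = Some u \<and> u \<in> pdom g then G r else G0 r)" for r
    have "realizes \<delta>U \<delta>V G' (totalization g)"
    proof (rule realizesI)
      fix r u assume r: "\<delta>U r = Some u"
      show "\<exists>q v. G' r = Some q \<and> \<delta>V q = Some v \<and> v \<in> totalization g u"
      proof (cases "u \<in> pdom g")
        case True
        then show ?thesis
          using realizesD[OF G r True] r by (auto simp: G'_def totalization_def pdom_def)
      next
        case False
        then have "totalization g u = UNIV"
          by (simp add: totalization_def pdom_def)
        then show ?thesis
          using G0_valid[of r] r False by (auto simp: G'_def)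
      qed
    qed
    moreover have "reduced_realizer H G K p = reduced_realizer H G' K p"
      if "\<delta>X p = Some x" "x \<in> pdom f" for p x
      using query[OF that] by (auto simp: G'_def)
    ultimately show "\<exists>G'. realizes \<delta>U \<delta>V G' (totalization g) \<and>
        (\<forall>p x. \<delta>X p = Some x \<longrightarrow> x \<in> pdom f \<longrightarrow>
        reduced_realizer H G K p = reduced_realizer H G' K p)"
      by blast
  qed
  then show ?thesis
    unfolding sW_le_iff_reduces_via using HK by blast
qed

theorem proposition4p13:
  fixes \<delta>X :: "baire \<Rightarrow> 'x option" and \<delta>Y :: "baire \<Rightarrow> 'y option"
    and \<delta>U :: "baire \<Rightarrow> 'u option" and \<delta>V :: "baire \<Rightarrow> 'v option"
    and f :: "'x \<Rightarrow> 'y set" and g :: "'u \<Rightarrow> 'v set"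
  assumes "represented \<delta>X" and "represented \<delta>Y"
    and "represented \<delta>U" and "represented \<delta>V"
    and "diverse f"
  shows "(sW_le \<delta>X \<delta>Y f (compl_rep \<delta>U) (compl_rep \<delta>V) (compl_prob g)
            \<longleftrightarrow> sW_le \<delta>X \<delta>Y f \<delta>U \<delta>V g)
       \<and> ((\<forall>p. \<delta>Y p \<noteq> None) \<longrightarrow>
            (sW_le \<delta>X \<delta>Y f \<delta>U \<delta>V (totalization g) \<longleftrightarrow> sW_le \<delta>X \<delta>Y f \<delta>U \<delta>V g))"
  using sW_le_if_sW_le_compl_prob[OF assms(5,1,4)] sW_le_compl_prob_if_sW_le
    sW_le_if_sW_le_totalization[OF assms(5,1,4)] sW_le_totalization_if_sW_le
  by blast

end
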